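(* Let $N\ge 5$ be odd. Let $G_{N,2}$ be the graph with vertex set $\mathbb Z_N$ in which two distinct vertices $x,y$ are adjacent iff $y-x\not\equiv\pm2\pmod N$. Put $\Delta=\sqrt{N(N-4)}$, $\rho=\frac{N-2+\Delta}{2}$. Then $G_{N,2}$ is $(N-3)$-regular with $\frac{N(N-3)}{2}$ edges, and for $u,v\in\mathbb Z_N$, with $q\equiv v-u\pmod N$, $s\equiv 2^{-1}\pmod N$, $\delta_2(q)=\min\{sq\bmod N,\;N-(sq\bmod N)\}$, the expected hitting time of $v$ by the simple random walk on $G_{N,2}$ started at $u$ satisfies $H^{(2)}(u,v)=\frac{N(N-3)}{2}R^{(2)}(u,v)$, where $R^{(2)}$ is effective resistance in $G_{N,2}$, and explicitly \[ H^{(2)}(u,v)=\frac{N(N-3)}{\Delta(\rho^N+1)}\left\{\rho^N-1+(-1)^{\delta_2(q)}\left(\rho^{\delta_2(q)}-\rho^{N-\delta_2(q)}\right)\right\}. \]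
   Context: The simple random walk moves to a uniformly random neighbour at each step; effective resistance uses unit conductance on every edge. *)

theory Defs
  imports Complex_Main
begin

text \<open>Generic finite simple graph given by a vertex set V and a symmetric irreflexive
  adjacency relation adj.\<close>

definition deg :: "'a set \<Rightarrow> ('a \<Rightarrow> 'a \<Rightarrow> bool) \<Rightarrow> 'a \<Rightarrow> nat" where
  "deg V adj x = card {y \<in> V. adj x y}"

definition edges :: "'a set \<Rightarrow> ('a \<Rightarrow> 'a \<Rightarrow> bool) \<Rightarrow> 'a set set" where
  "edges V adj = {{x, y} | x y. x \<in> V \<and> y \<in> V \<and> adj x y}"

text \<open>Simple random walk started at u, killed on hitting v:
  surv V adj u v n x = P(X_n = x and X_i \<noteq> v for all i \<le> n).\<close>
fun surv :: "'a set \<Rightarrow> ('a \<Rightarrow> 'a \<Rightarrow> bool) \<Rightarrow> 'a \<Rightarrow> 'a \<Rightarrow> nat \<Rightarrow> 'a \<Rightarrow> real" where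
  "surv V adj u v 0 y = (if y = u \<and> u \<noteq> v then 1 else 0)"
| "surv V adj u v (Suc n) y =
     (if y = v then 0
      else (\<Sum>x\<in>V. surv V adj u v n x * (if adj x y then 1 / real (deg V adj x) else 0)))"

text \<open>P(T_v > n) where T_v = min {n \<ge> 0. X_n = v} is the hitting time of v.\<close>
definition tail_prob :: "'a set \<Rightarrow> ('a \<Rightarrow> 'a \<Rightarrow> bool) \<Rightarrow> 'a \<Rightarrow> 'a \<Rightarrow> nat \<Rightarrow> real" where
  "tail_prob V adj u v n = (\<Sum>x\<in>V. surv V adj u v n x)"

text \<open>Expected hitting time E_u[T_v] = \<Sum>_{n\<ge>0} P_u(T_v > n).\<close>
definition hitting_time :: "'a set \<Rightarrow> ('a \<Rightarrow> 'a \<Rightarrow> bool) \<Rightarrow> 'a \<Rightarrow> 'a \<Rightarrow> real" where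
  "hitting_time V adj u v = (\<Sum>n. tail_prob V adj u v n)"

definition energy :: "'a set \<Rightarrow> ('a \<Rightarrow> 'a \<Rightarrow> bool) \<Rightarrow> ('a \<Rightarrow> real) \<Rightarrow> real" where
  "energy V adj \<phi> = (\<Sum>x\<in>V. \<Sum>y\<in>V. if adj x y then (\<phi> x - \<phi> y)\<^sup>2 else 0) / 2"

text \<open>Effective resistance = 1 / effective conductance (Dirichlet principle).\<close>
definition eff_res :: "'a set \<Rightarrow> ('a \<Rightarrow> 'a \<Rightarrow> bool) \<Rightarrow> 'a \<Rightarrow> 'a \<Rightarrow> real" where
  "eff_res V adj u v =
     (if u = v then 0
      else 1 / Inf {energy V adj \<phi> | \<phi>. \<phi> u = 1 \<and> \<phi> v = 0})"

definition GN2_adj :: "nat \<Rightarrow> nat \<Rightarrow> nat \<Rightarrow> bool" where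
  "GN2_adj N x y \<longleftrightarrow> x \<noteq> y \<and> (int y - int x) mod int N \<noteq> 2 \<and> (int x - int y) mod int N \<noteq> 2"

end

theory Submission
  imports Defs
begin

(* The complement of G_{N,2} is the cycle x ~ x +- 2, and multiplication by s = 2^-1 turns it into
   the standard cycle x ~ x +- 1. So the expected hitting time of w should be h_w x = g_j with
   j = s (x - w) mod N, where g solves, for 0 < j < N, the three-term recurrence
   (N - 2) g_j + g_(j+1) + g_(j-1) = N - 3 + sum g with characteristic roots -rho and -1/rho, and
   g_0 = g_N = 0; the closed form of the statement is this solution.
   A function h with h w = 0 whose Laplacian equals the degree away from w is the expected hitting
   time of w: E[h(X_n); T_w > n] drops by exactly P(T_w > n) at each step. The effective resistance
   comes from the Dirichlet principle applied to the normalised difference of the potentials of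
   u and v (the commute time identity), and h_v u = h_u v because g_j = g_(N-j). *)

section \<open>Finite graphs\<close>

lemma card_edges_handshake:
  assumes "finite V" and sym: "\<And>x y. adj x y = adj y x" and irrefl: "\<And>x. \<not> adj x x"
  shows "2 * card (edges V adj) = (\<Sum>x\<in>V. deg V adj x)"
proof -
  define Q where "Q = (SIGMA x:V. {y \<in> V. adj x y})"
  define ends :: "'a \<times> 'a \<Rightarrow> 'a set" where "ends = (\<lambda>(x, y). {x, y})"
  have Q_finite: "finite Q" unfolding Q_def using assms(1) by auto
  have edges_eq: "edges V adj = ends ` Q" unfolding edges_def Q_def ends_def by auto
  have fibre: "card {p \<in> Q. ends p = e} = 2" if e_edge: "e \<in> edges V adj" for e
  proof -
    obtain x y where e: "e = {x, y}" "x \<in> V" "y \<in> V" "adj x y"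
      using e_edge unfolding edges_def by auto
    then have "x \<noteq> y" using irrefl by auto
    have "{p \<in> Q. ends p = e} = {(x, y), (y, x)}"
      using e sym unfolding Q_def ends_def by (auto simp: doubleton_eq_iff)
    then show ?thesis using \<open>x \<noteq> y\<close> by simp
  qed
  have "(\<Sum>x\<in>V. deg V adj x) = card Q"
    unfolding Q_def deg_def using assms(1) by simp
  also have "\<dots> = (\<Sum>e\<in>edges V adj. card {p \<in> Q. ends p = e})"
    unfolding edges_eq card_eq_sum using Q_finite by (intro sum.group[symmetric]) auto
  also have "\<dots> = 2 * card (edges V adj)"
    using fibre by simp
  finally show ?thesis by simp
qed

definition laplacian :: "'a set \<Rightarrow> ('a \<Rightarrow> 'a \<Rightarrow> bool) \<Rightarrow> ('a \<Rightarrow> real) \<Rightarrow> 'a \<Rightarrow> real" where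
  "laplacian V adj f x = (\<Sum>y\<in>V. if adj x y then f x - f y else 0)"

lemma laplacian_split:
  "laplacian V adj f x = (\<Sum>y\<in>V. if adj x y then f x else 0) - (\<Sum>y\<in>V. if adj x y then f y else 0)"
  unfolding laplacian_def sum_subtractf[symmetric] by (intro sum.cong) auto

lemma laplacian_eq_deg:
  assumes "finite V"
  shows "laplacian V adj f x = real (deg V adj x) * f x - (\<Sum>y\<in>V. if adj x y then f y else 0)"
proof -
  have "(\<Sum>y\<in>V. if adj x y then f x else 0) = real (deg V adj x) * f x"
    using assms unfolding deg_def by (simp flip: sum.inter_filter)
  then show ?thesis unfolding laplacian_split by simp
qed

lemma laplacian_affine:
  "laplacian V adj (\<lambda>x. (f x - g x + c) / e) x = (laplacian V adj f x - laplacian V adj g x) / e"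
  unfolding laplacian_def sum_subtractf[symmetric] sum_divide_distrib
  by (intro sum.cong) (auto simp: field_split_simps)

lemma sum_laplacian_eq_0:
  assumes "finite V" and sym: "\<And>x y. adj x y = adj y x"
  shows "(\<Sum>x\<in>V. laplacian V adj f x) = 0"
proof -
  have "(\<Sum>x\<in>V. \<Sum>y\<in>V. if adj x y then f y else 0) = (\<Sum>y\<in>V. \<Sum>x\<in>V. if adj y x then f y else 0)"
    by (subst sum.swap) (simp add: sym)
  then show ?thesis
    unfolding laplacian_split by (simp add: sum_subtractf)
qed

lemma green_identity:
  assumes "finite V" and sym: "\<And>x y. adj x y = adj y x"
  shows "(\<Sum>x\<in>V. \<Sum>y\<in>V. if adj x y then (f x - f y) * (g x - g y) else 0)
       = 2 * (\<Sum>x\<in>V. g x * laplacian V adj f x)"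
proof -
  define A where "A = (\<Sum>x\<in>V. \<Sum>y\<in>V. if adj x y then (f x - f y) * g x else 0)"
  define B where "B = (\<Sum>x\<in>V. \<Sum>y\<in>V. if adj x y then (f x - f y) * g y else 0)"
  have "B = (\<Sum>y\<in>V. \<Sum>x\<in>V. if adj y x then (f x - f y) * g y else 0)"
    unfolding B_def by (subst sum.swap) (simp add: sym)
  also have "\<dots> = - A"
    unfolding A_def sum_negf[symmetric] by (intro sum.cong) (auto simp: algebra_simps)
  finally have "B = - A" .
  moreover have "(\<Sum>x\<in>V. \<Sum>y\<in>V. if adj x y then (f x - f y) * (g x - g y) else 0) = A - B"
    unfolding A_def B_def sum_subtractf[symmetric] by (intro sum.cong) (auto simp: right_diff_distrib)
  moreover have "A = (\<Sum>x\<in>V. g x * laplacian V adj f x)"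
    unfolding A_def laplacian_def sum_distrib_left by (intro sum.cong) auto
  ultimately show ?thesis by simp
qed

lemma energy_eq_laplacian:
  assumes "finite V" and "\<And>x y. adj x y = adj y x"
  shows "energy V adj f = (\<Sum>x\<in>V. f x * laplacian V adj f x)"
  using green_identity[OF assms, where f=f and g=f] unfolding energy_def power2_eq_square by simp

lemma energy_add:
  assumes "finite V" and "\<And>x y. adj x y = adj y x"
  shows "energy V adj (\<lambda>x. f x + g x)
       = energy V adj f + energy V adj g + 2 * (\<Sum>x\<in>V. g x * laplacian V adj f x)"
proof -
  have "(if adj x y then ((f x + g x) - (f y + g y))\<^sup>2 else 0)
      = (if adj x y then (f x - f y)\<^sup>2 else 0) + (if adj x y then (g x - g y)\<^sup>2 else 0)
        + 2 * (if adj x y then (f x - f y) * (g x - g y) else 0)"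
    for x y by (simp add: power2_eq_square algebra_simps)
  then have "(\<Sum>x\<in>V. \<Sum>y\<in>V. if adj x y then ((f x + g x) - (f y + g y))\<^sup>2 else 0)
     = (\<Sum>x\<in>V. \<Sum>y\<in>V. if adj x y then (f x - f y)\<^sup>2 else 0)
       + (\<Sum>x\<in>V. \<Sum>y\<in>V. if adj x y then (g x - g y)\<^sup>2 else 0)
       + 2 * (\<Sum>x\<in>V. \<Sum>y\<in>V. if adj x y then (f x - f y) * (g x - g y) else 0)"
    by (simp add: sum.distrib sum_distrib_left)
  then show ?thesis unfolding energy_def green_identity[OF assms] by simp
qed

lemma energy_nonneg: "energy V adj f \<ge> 0"
  unfolding energy_def by (auto intro!: sum_nonneg)

text \<open>Dirichlet principle: a unit potential harmonic off \<open>{u, v}\<close> minimises the energy.\<close>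

lemma eff_res_eq_inverse_laplacian:
  assumes "finite V" and sym: "\<And>x y. adj x y = adj y x"
    and "u \<in> V" and "u \<noteq> v" and \<phi>u: "\<phi> u = 1" and \<phi>v: "\<phi> v = 0"
    and harmonic: "\<And>x. x \<in> V \<Longrightarrow> x \<noteq> u \<Longrightarrow> x \<noteq> v \<Longrightarrow> laplacian V adj \<phi> x = 0"
  shows "eff_res V adj u v = 1 / laplacian V adj \<phi> u"
proof -
  let ?E = "{energy V adj \<psi> | \<psi>. \<psi> u = 1 \<and> \<psi> v = 0}"
  have "\<phi> x * laplacian V adj \<phi> x = (if x = u then laplacian V adj \<phi> u else 0)" if "x \<in> V" for x
    using that \<phi>u \<phi>v harmonic by auto
  then have energy_\<phi>: "energy V adj \<phi> = laplacian V adj \<phi> u"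
    using \<open>u \<in> V\<close> \<open>finite V\<close> by (simp add: energy_eq_laplacian[OF assms(1) sym] cong: sum.cong)
  have "laplacian V adj \<phi> u \<le> energy V adj \<psi>" if "\<psi> u = 1" "\<psi> v = 0" for \<psi>
  proof -
    define \<eta> where "\<eta> x = \<psi> x - \<phi> x" for x
    have "\<eta> x * laplacian V adj \<phi> x = 0" if "x \<in> V" for x
      using that \<open>\<psi> u = 1\<close> \<open>\<psi> v = 0\<close> \<phi>u \<phi>v harmonic[of x]
      by (cases "x = u \<or> x = v") (auto simp: \<eta>_def)
    then have "(\<Sum>x\<in>V. \<eta> x * laplacian V adj \<phi> x) = 0" by (intro sum.neutral) blast
    moreover have "energy V adj \<psi>
        = energy V adj \<phi> + energy V adj \<eta> + 2 * (\<Sum>x\<in>V. \<eta> x * laplacian V adj \<phi> x)"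
      using energy_add[OF assms(1) sym, where f=\<phi> and g=\<eta>] by (simp add: \<eta>_def)
    ultimately show ?thesis using energy_\<phi> energy_nonneg[of V adj \<eta>] by simp
  qed
  moreover have "laplacian V adj \<phi> u \<in> ?E"
    using \<phi>u \<phi>v energy_\<phi> by (metis (mono_tags, lifting) mem_Collect_eq)
  ultimately have "Inf ?E = laplacian V adj \<phi> u"
    by (intro cInf_eq_minimum) auto
  then show ?thesis unfolding eff_res_def using \<open>u \<noteq> v\<close> by simp
qed

section \<open>Hitting potentials\<close>

definition hitting_potential :: "'a set \<Rightarrow> ('a \<Rightarrow> 'a \<Rightarrow> bool) \<Rightarrow> 'a \<Rightarrow> ('a \<Rightarrow> real) \<Rightarrow> bool" where
  "hitting_potential V adj w h \<longleftrightarrow>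
     h w = 0 \<and> (\<forall>x\<in>V - {w}. laplacian V adj h x = real (deg V adj x))"

lemma laplacian_hitting_potential_target:
  assumes "finite V" and "\<And>x y. adj x y = adj y x" and "w \<in> V"
    and "hitting_potential V adj w h"
  shows "laplacian V adj h w = real (deg V adj w) - (\<Sum>x\<in>V. real (deg V adj x))"
proof -
  have "(\<Sum>x\<in>V. laplacian V adj h x) = 0"
    by (rule sum_laplacian_eq_0[OF assms(1,2)])
  then have "0 = laplacian V adj h w + (\<Sum>x\<in>V - {w}. laplacian V adj h x)"
    using sum.remove[OF assms(1,3), of "laplacian V adj h"] by simp
  also have "(\<Sum>x\<in>V - {w}. laplacian V adj h x) = (\<Sum>x\<in>V - {w}. real (deg V adj x))"
    using assms(4) unfolding hitting_potential_def by simp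
  also have "\<dots> = (\<Sum>x\<in>V. real (deg V adj x)) - real (deg V adj w)"
    using sum.remove[OF assms(1,3), of "\<lambda>x. real (deg V adj x)"] by simp
  finally show ?thesis by simp
qed

text \<open>Commute time identity: the normalised difference of the two hitting potentials is the
  equilibrium potential of \<open>u\<close> and \<open>v\<close>.\<close>

lemma eff_res_hitting_potentials:
  assumes "finite V" and sym: "\<And>x y. adj x y = adj y x"
    and "u \<in> V" and "v \<in> V" and "u \<noteq> v"
    and hu: "hitting_potential V adj u h\<^sub>u" and hv: "hitting_potential V adj v h\<^sub>v"
    and commute: "h\<^sub>v u + h\<^sub>u v \<noteq> 0"
  shows "eff_res V adj u v = (h\<^sub>v u + h\<^sub>u v) / (\<Sum>x\<in>V. real (deg V adj x))"
proof -
  define C where "C = h\<^sub>v u + h\<^sub>u v"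
  define \<phi> where "\<phi> x = (h\<^sub>v x - h\<^sub>u x + h\<^sub>u v) / C" for x
  have lap_\<phi>: "laplacian V adj \<phi> x = (laplacian V adj h\<^sub>v x - laplacian V adj h\<^sub>u x) / C" for x
    unfolding \<phi>_def by (rule laplacian_affine)
  have "eff_res V adj u v = 1 / laplacian V adj \<phi> u"
  proof (rule eff_res_eq_inverse_laplacian[OF assms(1) sym \<open>u \<in> V\<close> \<open>u \<noteq> v\<close>])
    show "\<phi> u = 1" "\<phi> v = 0"
      using hu hv commute unfolding \<phi>_def C_def hitting_potential_def by simp_all
    show "laplacian V adj \<phi> x = 0" if "x \<in> V" "x \<noteq> u" "x \<noteq> v" for x
      using that hu hv unfolding lap_\<phi> hitting_potential_def by simp
  qed
  also have "laplacian V adj \<phi> u = (\<Sum>x\<in>V. real (deg V adj x)) / C"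
    using hv \<open>u \<in> V\<close> \<open>u \<noteq> v\<close> laplacian_hitting_potential_target[OF assms(1) sym \<open>u \<in> V\<close> hu]
    unfolding lap_\<phi> hitting_potential_def by simp
  finally show ?thesis unfolding C_def by simp
qed

lemma sums_of_decrements:
  fixes \<Phi> t :: "nat \<Rightarrow> real"
  assumes step: "\<And>n. \<Phi> (Suc n) = \<Phi> n - t n"
    and t_nonneg: "\<And>n. 0 \<le> t n" and \<Phi>_nonneg: "\<And>n. 0 \<le> \<Phi> n"
    and dominated: "\<And>n. \<Phi> n \<le> M * t n"
  shows "t sums \<Phi> 0"
proof -
  have partial: "(\<Sum>i<n. t i) = \<Phi> 0 - \<Phi> n" for n
    by (induction n) (simp_all add: step)
  have "summable t"
  proof (rule summableI_nonneg_bounded)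
    show "0 \<le> t n" for n by (rule t_nonneg)
    show "(\<Sum>i<n. t i) \<le> \<Phi> 0" for n unfolding partial using \<Phi>_nonneg[of n] by simp
  qed
  then have "(\<lambda>n. M * t n) \<longlonglongrightarrow> 0"
    by (intro tendsto_mult_right_zero summable_LIMSEQ_zero)
  moreover have "eventually (\<lambda>n. 0 \<le> \<Phi> n) sequentially"
    and "eventually (\<lambda>n. \<Phi> n \<le> M * t n) sequentially"
    using \<Phi>_nonneg dominated by simp_all
  ultimately have "\<Phi> \<longlonglongrightarrow> 0"
    by (intro tendsto_sandwich[where f="\<lambda>_. 0" and g=\<Phi> and h="\<lambda>n. M * t n"] tendsto_const)
  then have "(\<lambda>n. \<Phi> 0 - \<Phi> n) \<longlonglongrightarrow> \<Phi> 0 - 0"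
    by (intro tendsto_diff tendsto_const)
  then show ?thesis unfolding sums_def partial by simp
qed

lemma surv_target: "surv V adj u v n v = 0"
  by (cases n) auto

lemma surv_nonneg: "0 \<le> surv V adj u v n y"
  by (induction n arbitrary: y) (auto intro!: sum_nonneg)

lemma hitting_potential_mean_value:
  assumes "finite V" and "hitting_potential V adj v h"
    and "x \<in> V" and "x \<noteq> v" and "deg V adj x > 0"
  shows "(\<Sum>y\<in>V. (if adj x y then 1 / real (deg V adj x) else 0) * h y) = h x - 1"
proof -
  have "real (deg V adj x) = laplacian V adj h x"
    using assms unfolding hitting_potential_def by simp
  then have "(\<Sum>y\<in>V. if adj x y then h y else 0) = real (deg V adj x) * (h x - 1)"
    unfolding laplacian_eq_deg[OF assms(1)] by (simp add: algebra_simps)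
  moreover have "(\<Sum>y\<in>V. (if adj x y then 1 / real (deg V adj x) else 0) * h y)
      = (\<Sum>y\<in>V. if adj x y then h y else 0) / real (deg V adj x)"
    unfolding sum_divide_distrib by (intro sum.cong) auto
  ultimately show ?thesis using \<open>deg V adj x > 0\<close> by simp
qed

lemma sum_surv_hitting_potential_Suc:
  assumes "finite V" and h: "hitting_potential V adj v h"
    and deg_pos: "\<And>x. x \<in> V \<Longrightarrow> x \<noteq> v \<Longrightarrow> deg V adj x > 0"
  shows "(\<Sum>x\<in>V. surv V adj u v (Suc n) x * h x)
    = (\<Sum>x\<in>V. surv V adj u v n x * h x) - tail_prob V adj u v n"
proof -
  let ?p = "surv V adj u v n"
  let ?P = "\<lambda>x y. if adj x y then 1 / real (deg V adj x) else 0"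
  have "(\<Sum>y\<in>V. surv V adj u v (Suc n) y * h y) = (\<Sum>y\<in>V. \<Sum>x\<in>V. ?p x * ?P x y * h y)"
    using h unfolding hitting_potential_def by (intro sum.cong) (auto simp: sum_distrib_right)
  also have "\<dots> = (\<Sum>x\<in>V. ?p x * (\<Sum>y\<in>V. ?P x y * h y))"
    by (subst sum.swap) (simp add: sum_distrib_left mult.assoc)
  also have "\<dots> = (\<Sum>x\<in>V. ?p x * (h x - 1))"
  proof (intro sum.cong refl)
    fix x assume "x \<in> V"
    then show "?p x * (\<Sum>y\<in>V. ?P x y * h y) = ?p x * (h x - 1)"
      using hitting_potential_mean_value[OF assms(1) h] deg_pos surv_target
      by (cases "x = v") auto
  qed
  finally show ?thesis
    unfolding tail_prob_def by (simp add: algebra_simps sum_subtractf)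
qed

lemma tail_prob_sums_hitting_potential:
  assumes "finite V" and "u \<in> V" and h: "hitting_potential V adj v h"
    and h_nonneg: "\<And>x. x \<in> V \<Longrightarrow> 0 \<le> h x"
    and deg_pos: "\<And>x. x \<in> V \<Longrightarrow> x \<noteq> v \<Longrightarrow> deg V adj x > 0"
  shows "tail_prob V adj u v sums h u"
proof -
  define \<Phi> where "\<Phi> n = (\<Sum>x\<in>V. surv V adj u v n x * h x)" for n
  have step: "\<Phi> (Suc n) = \<Phi> n - tail_prob V adj u v n" for n
    unfolding \<Phi>_def by (rule sum_surv_hitting_potential_Suc[OF assms(1) h deg_pos])
  have "\<Phi> 0 = h u"
  proof (cases "u = v")
    case True
    with h show ?thesis unfolding \<Phi>_def hitting_potential_def by simp
  next
    case False
    then have "\<Phi> 0 = (\<Sum>x\<in>V. if x = u then h u else 0)"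
      unfolding \<Phi>_def by (intro sum.cong) auto
    with \<open>finite V\<close> \<open>u \<in> V\<close> show ?thesis by simp
  qed
  have dominated: "\<Phi> n \<le> (\<Sum>x\<in>V. h x) * tail_prob V adj u v n" for n
  proof -
    have "\<Phi> n \<le> (\<Sum>x\<in>V. surv V adj u v n x * (\<Sum>y\<in>V. h y))"
      unfolding \<Phi>_def using \<open>finite V\<close> h_nonneg
      by (intro sum_mono mult_left_mono surv_nonneg member_le_sum) auto
    then show ?thesis unfolding tail_prob_def by (simp add: sum_distrib_left mult.commute)
  qed
  have tail_nonneg: "0 \<le> tail_prob V adj u v n" for n
    unfolding tail_prob_def by (intro sum_nonneg surv_nonneg)
  have \<Phi>_nonneg: "0 \<le> \<Phi> n" for n
    unfolding \<Phi>_def using h_nonneg by (intro sum_nonneg mult_nonneg_nonneg surv_nonneg) auto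
  show ?thesis
    using sums_of_decrements[where \<Phi>=\<Phi> and t="tail_prob V adj u v",
        OF step tail_nonneg \<Phi>_nonneg dominated] \<open>\<Phi> 0 = h u\<close>
    by simp
qed

section \<open>The graph \<open>G\<^sub>N\<^sub>,\<^sub>2\<close>\<close>

definition gn2_Delta :: "nat \<Rightarrow> real" where
  "gn2_Delta N = sqrt (real N * (real N - 4))"

definition gn2_rho :: "nat \<Rightarrow> real" where
  "gn2_rho N = (real N - 2 + gn2_Delta N) / 2"

definition gn2_scale :: "nat \<Rightarrow> real" where
  "gn2_scale N = real N * (real N - 3) / (gn2_Delta N * (gn2_rho N ^ N + 1))"

definition gn2_hit :: "nat \<Rightarrow> nat \<Rightarrow> real" where
  "gn2_hit N j = gn2_scale N *
     (gn2_rho N ^ N - 1 + (-1) ^ j * (gn2_rho N ^ j - gn2_rho N ^ (N - j)))"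

definition gn2_hit_int :: "nat \<Rightarrow> int \<Rightarrow> real" where
  "gn2_hit_int N k = gn2_hit N (nat (k mod int N))"

definition gn2_potential :: "nat \<Rightarrow> int \<Rightarrow> nat \<Rightarrow> nat \<Rightarrow> real" where
  "gn2_potential N s w x = gn2_hit_int N (s * (int x - int w))"

lemma eq_mod_iff_dvd:
  fixes y a N :: nat
  assumes "y < N"
  shows "y = a mod N \<longleftrightarrow> int N dvd int y - int a"
proof -
  have "y = a mod N \<longleftrightarrow> int y mod int N = int a mod int N"
    using assms by (metis mod_less of_nat_eq_iff of_nat_mod)
  then show ?thesis by (simp add: mod_eq_dvd_iff)
qed

lemma int_mod_eq_iff_dvd:
  fixes k c :: int
  assumes "0 \<le> c" and "c < n"
  shows "k mod n = c \<longleftrightarrow> n dvd k - c"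
  using assms mod_eq_dvd_iff[of k n c] by simp

locale GN2 =
  fixes N :: nat
  assumes odd_N: "odd N" and N_ge_5: "5 \<le> N"
begin

abbreviation "\<Delta> \<equiv> gn2_Delta N"
abbreviation "\<rho> \<equiv> gn2_rho N"
abbreviation "g \<equiv> gn2_hit N"

lemma Delta_pos: "\<Delta> > 0"
  unfolding gn2_Delta_def using N_ge_5 by simp

lemma rho_gt_1: "\<rho> > 1"
  unfolding gn2_rho_def using Delta_pos N_ge_5 by simp

lemma rho_characteristic: "\<rho>\<^sup>2 = (real N - 2) * \<rho> - 1"
  and rho_minus_1: "real N * (\<rho> - 1) = \<Delta> * (\<rho> + 1)"
proof -
  have "\<Delta>\<^sup>2 = real N * (real N - 4)"
    unfolding gn2_Delta_def using N_ge_5 by simp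
  then show "\<rho>\<^sup>2 = (real N - 2) * \<rho> - 1" "real N * (\<rho> - 1) = \<Delta> * (\<rho> + 1)"
    unfolding gn2_rho_def by (simp_all add: power2_eq_square field_simps)
qed

lemma gn2_scale_pos: "gn2_scale N > 0"
  unfolding gn2_scale_def using N_ge_5 Delta_pos rho_gt_1
  by (intro divide_pos_pos mult_pos_pos) (auto intro: add_pos_pos)

lemma gn2_hit_0: "g 0 = 0" and gn2_hit_N: "g N = 0"
  unfolding gn2_hit_def using odd_N by simp_all

lemma gn2_hit_reflect:
  assumes "j \<le> N" shows "g (N - j) = g j"
proof -
  have "(-1::real) ^ (N - j) * (-1) ^ j = -1"
    using assms odd_N by (simp flip: power_add)
  then have "(-1::real) ^ (N - j) = - ((-1) ^ j)"
    by (simp add: minus_one_power_iff split: if_splits)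
  then show ?thesis unfolding gn2_hit_def using assms by (simp add: algebra_simps)
qed

lemma abs_rho_power_diff_less:
  assumes "0 < j" and "j < N"
  shows "\<bar>\<rho> ^ j - \<rho> ^ (N - j)\<bar> < \<rho> ^ N - 1"
proof -
  have "1 \<le> \<rho> ^ j" "1 \<le> \<rho> ^ (N - j)"
    using rho_gt_1 by (auto intro: one_le_power)
  moreover have "\<rho> ^ j < \<rho> ^ N" "\<rho> ^ (N - j) < \<rho> ^ N"
    using assms rho_gt_1 by (auto intro: power_strict_increasing)
  ultimately show ?thesis by (simp add: abs_less_iff)
qed

lemma gn2_hit_pos:
  assumes "0 < j" and "j < N" shows "0 < g j"
proof -
  have "- \<bar>x\<bar> \<le> (-1::real) ^ j * x" for x
    by (cases "even j") auto
  then have "0 < \<rho> ^ N - 1 + (-1) ^ j * (\<rho> ^ j - \<rho> ^ (N - j))"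
    using abs_rho_power_diff_less[OF assms] by (smt (verit))
  then show ?thesis
    unfolding gn2_hit_def using gn2_scale_pos by simp
qed

lemma gn2_hit_nonneg:
  assumes "j \<le> N" shows "0 \<le> g j"
proof (cases "0 < j \<and> j < N")
  case True
  then show ?thesis using gn2_hit_pos by (simp add: less_imp_le)
next
  case False
  then have "j = 0 \<or> j = N" using assms by auto
  then show ?thesis using gn2_hit_0 gn2_hit_N by auto
qed

lemma sum_alternating_rho:
  "(\<Sum>j<N. (-1) ^ j * (\<rho> ^ j - \<rho> ^ (N - j))) = (1 - \<rho>) * (1 + \<rho> ^ N) / (1 + \<rho>)"
proof -
  have geometric: "(\<Sum>j<N. (- \<rho>) ^ j) = (1 + \<rho> ^ N) / (1 + \<rho>)"
    using rho_gt_1 odd_N sum_gp_strict[of "- \<rho>" N] by simp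
  have "(\<Sum>j<N. (-1) ^ j * \<rho> ^ (N - j)) = (\<Sum>j<N. (-1) ^ (N - Suc j) * \<rho> ^ (N - (N - Suc j)))"
    by (rule sum.nat_diff_reindex[symmetric])
  also have "\<dots> = (\<Sum>j<N. \<rho> * (- \<rho>) ^ j)"
  proof (intro sum.cong refl)
    fix j assume "j \<in> {..<N}"
    then have "even (N - Suc j) \<longleftrightarrow> even j" and "N - (N - Suc j) = Suc j"
      using odd_N by auto
    then show "(-1) ^ (N - Suc j) * \<rho> ^ (N - (N - Suc j)) = \<rho> * (- \<rho>) ^ j"
      by (simp add: power_minus[of \<rho> j] minus_one_power_iff)
  qed
  finally have "(\<Sum>j<N. (-1) ^ j * \<rho> ^ (N - j)) = \<rho> * ((1 + \<rho> ^ N) / (1 + \<rho>))"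
    by (simp add: sum_distrib_left[symmetric] geometric)
  moreover have "(\<Sum>j<N. (-1) ^ j * \<rho> ^ j) = (1 + \<rho> ^ N) / (1 + \<rho>)"
    using geometric by (simp add: power_minus[of \<rho>])
  ultimately show ?thesis
    unfolding right_diff_distrib sum_subtractf by (simp add: left_diff_distrib diff_divide_distrib)
qed

lemma sum_gn2_hit: "(\<Sum>j<N. g j) = gn2_scale N * real N * (\<rho> ^ N - 1) - (real N - 3)"
proof -
  have ratio: "(1 - \<rho>) / (1 + \<rho>) = - \<Delta> / real N"
    using rho_minus_1 rho_gt_1 N_ge_5 by (simp add: field_simps)
  have "0 < \<rho> ^ N" using rho_gt_1 by simp
  then have scale: "gn2_scale N * (1 + \<rho> ^ N) = real N * (real N - 3) / \<Delta>"
    unfolding gn2_scale_def by (simp add: add.commute)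
  have "(\<Sum>j<N. g j) = gn2_scale N * (real N * (\<rho> ^ N - 1) + (1 - \<rho>) * (1 + \<rho> ^ N) / (1 + \<rho>))"
    unfolding gn2_hit_def sum_distrib_left[symmetric] sum.distrib sum_alternating_rho by simp
  also have "\<dots> = gn2_scale N * real N * (\<rho> ^ N - 1)
      + gn2_scale N * (1 + \<rho> ^ N) * ((1 - \<rho>) / (1 + \<rho>))"
    by (simp add: distrib_left mult_ac add_divide_distrib)
  finally show ?thesis unfolding scale ratio using N_ge_5 Delta_pos by simp
qed

text \<open>Both \<open>(-\<rho>)\<^sup>j\<close> and \<open>(-\<rho>)\<^sup>-\<^sup>j\<close> solve the homogeneous recurrence, by
  \<open>rho_characteristic\<close>.\<close>

lemma gn2_hit_recurrence:
  assumes "1 \<le> j" "j < N"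
  shows "(real N - 2) * g j + g (j + 1) + g (j - 1) = (real N - 3) + (\<Sum>i<N. g i)"
proof -
  obtain i where i: "j = Suc i"
    using assms by (cases j) auto
  obtain m where m: "N = i + 2 + m"
    using assms i le_Suc_ex[of "i + 2" N] by auto
  define e :: real where "e = (-1) ^ i"
  have g1: "g j = gn2_scale N * (\<rho> ^ N - 1 - e * (\<rho> * \<rho> ^ i - \<rho> * \<rho> ^ m))"
    and g2: "g (j + 1) = gn2_scale N * (\<rho> ^ N - 1 + e * (\<rho>\<^sup>2 * \<rho> ^ i - \<rho> ^ m))"
    and g3: "g (j - 1) = gn2_scale N * (\<rho> ^ N - 1 + e * (\<rho> ^ i - \<rho>\<^sup>2 * \<rho> ^ m))"
    unfolding gn2_hit_def e_def i using m by (simp_all add: power_add power2_eq_square)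
  have "(real N - 2) * g j + g (j + 1) + g (j - 1)
      = gn2_scale N * (real N * (\<rho> ^ N - 1)
          + e * (\<rho> ^ i - \<rho> ^ m) * (\<rho>\<^sup>2 - (real N - 2) * \<rho> + 1))"
    unfolding g1 g2 g3 by (simp add: algebra_simps)
  then show ?thesis using rho_characteristic sum_gn2_hit by simp
qed

abbreviation "V \<equiv> {0..<N}"
abbreviation "adj \<equiv> GN2_adj N"

lemma GN2_adj_sym: "adj x y = adj y x"
  unfolding GN2_adj_def by auto

lemma GN2_adj_iff:
  assumes "x < N" and "y < N"
  shows "adj x y \<longleftrightarrow> y \<noteq> x \<and> y \<noteq> (x + 2) mod N \<and> y \<noteq> (x + N - 2) mod N"
proof -
  have "(int y - int x) mod int N = 2 \<longleftrightarrow> int N dvd int y - int (x + 2)"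
    using N_ge_5 by (subst int_mod_eq_iff_dvd) (auto simp: algebra_simps)
  moreover have "(int x - int y) mod int N = 2 \<longleftrightarrow> int N dvd int y - int (x + N - 2)"
  proof -
    have "int y - int (x + N - 2) = - (int x - int y - 2) - int N"
      using N_ge_5 by (simp add: of_nat_diff)
    then have "int N dvd int y - int (x + N - 2) \<longleftrightarrow> int N dvd int x - int y - 2"
      by (metis dvd_diff_left_iff dvd_minus_iff dvd_refl)
    then show ?thesis
      using N_ge_5 by (subst int_mod_eq_iff_dvd) auto
  qed
  ultimately show ?thesis
    unfolding GN2_adj_def eq_mod_iff_dvd[OF assms(2)] by auto
qed

lemma GN2_shifts_distinct:
  assumes "x < N"
  shows "(x + 2) mod N \<noteq> x" and "(x + N - 2) mod N \<noteq> x" and "(x + 2) mod N \<noteq> (x + N - 2) mod N"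
  using assms N_ge_5 by (auto simp: mod_if)

lemma GN2_neighbours:
  "x < N \<Longrightarrow> {y \<in> V. adj x y} = V - {x, (x + 2) mod N, (x + N - 2) mod N}"
  using GN2_adj_iff by auto

lemma deg_GN2:
  assumes "x < N" shows "deg V adj x = N - 3"
proof -
  have "{x, (x + 2) mod N, (x + N - 2) mod N} \<subseteq> V"
    using assms by auto
  then show ?thesis
    unfolding deg_def GN2_neighbours[OF assms] using GN2_shifts_distinct[OF assms]
    by (simp add: card_Diff_subset)
qed

lemma card_edges_GN2: "card (edges V adj) = N * (N - 3) div 2"
proof -
  have "2 * card (edges V adj) = (\<Sum>x\<in>V. deg V adj x)"
    by (rule card_edges_handshake) (auto simp: GN2_adj_def)
  also have "\<dots> = N * (N - 3)"
    using deg_GN2 by simp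
  finally show ?thesis by simp
qed

lemma laplacian_GN2:
  assumes "x < N"
  shows "laplacian V adj f x
    = (real N - 2) * f x + f ((x + 2) mod N) + f ((x + N - 2) mod N) - (\<Sum>y\<in>V. f y)"
proof -
  let ?X = "{x, (x + 2) mod N, (x + N - 2) mod N}"
  have "(\<Sum>y\<in>V. if adj x y then f y else 0) = sum f {y \<in> V. adj x y}"
    by (rule sum.inter_filter[symmetric]) simp
  also have "\<dots> = sum f (V - ?X)"
    unfolding GN2_neighbours[OF assms] ..
  also have "\<dots> = (\<Sum>y\<in>V. f y) - f x - f ((x + 2) mod N) - f ((x + N - 2) mod N)"
    using assms GN2_shifts_distinct[OF assms] by (simp add: sum_diff)
  finally show ?thesis
    unfolding laplacian_eq_deg[OF finite_atLeastLessThan] deg_GN2[OF assms]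
    using N_ge_5 by (simp add: algebra_simps)
qed

lemma mod_N_bounds: "0 \<le> k mod int N" "k mod int N < int N"
  using N_ge_5 by simp_all

lemma nat_mod_less: "nat (k mod int N) < N"
  using mod_N_bounds by (simp add: nat_less_iff)

lemma gn2_hit_int_nonneg: "0 \<le> gn2_hit_int N k"
  unfolding gn2_hit_int_def using nat_mod_less less_imp_le by (blast intro: gn2_hit_nonneg)

lemma gn2_hit_int_pos: "k mod int N \<noteq> 0 \<Longrightarrow> 0 < gn2_hit_int N k"
  unfolding gn2_hit_int_def using nat_mod_less mod_N_bounds(1)[of k] by (intro gn2_hit_pos) auto

lemma gn2_hit_int_uminus: "gn2_hit_int N (- k) = gn2_hit_int N k"
proof (cases "k mod int N = 0")
  case True
  then show ?thesis unfolding gn2_hit_int_def by (simp add: zmod_zminus1_eq_if)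
next
  case False
  then have "nat ((- k) mod int N) = N - nat (k mod int N)"
    using mod_N_bounds[of k] by (simp add: zmod_zminus1_eq_if nat_diff_distrib)
  then show ?thesis
    unfolding gn2_hit_int_def using gn2_hit_reflect[OF less_imp_le[OF nat_mod_less]] by simp
qed

lemma gn2_hit_int_recurrence:
  assumes "k mod int N \<noteq> 0"
  shows "(real N - 2) * gn2_hit_int N k + gn2_hit_int N (k + 1) + gn2_hit_int N (k - 1)
    = (real N - 3) + (\<Sum>i<N. g i)"
proof -
  define j where "j = nat (k mod int N)"
  have j: "int j = k mod int N" "1 \<le> j" "j < N"
    using assms nat_mod_less mod_N_bounds[of k] unfolding j_def by auto
  have "gn2_hit_int N (k + 1) = g (j + 1)"
  proof -
    have k1: "(k + 1) mod int N = (int j + 1) mod int N"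
      using j(1) by (simp add: mod_add_left_eq)
    show ?thesis
    proof (cases "j + 1 < N")
      case True
      then show ?thesis
        unfolding gn2_hit_int_def k1 by (simp add: mod_pos_pos_trivial nat_add_distrib)
    next
      case False
      then have "j + 1 = N" using j(3) by simp
      then have "(int j + 1) mod int N = 0"
        by (metis mod_self of_nat_1 of_nat_add)
      then show ?thesis
        unfolding gn2_hit_int_def k1 using \<open>j + 1 = N\<close> gn2_hit_0 gn2_hit_N by simp
    qed
  qed
  moreover have "gn2_hit_int N (k - 1) = g (j - 1)"
  proof -
    have "(k - 1) mod int N = (int j - 1) mod int N"
      using j(1) by (simp add: mod_diff_left_eq)
    also have "\<dots> = int j - 1"
      using j by (simp add: mod_pos_pos_trivial)
    finally show ?thesis
      unfolding gn2_hit_int_def using j(2) by (simp add: nat_diff_distrib)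
  qed
  moreover have "gn2_hit_int N k = g j"
    unfolding gn2_hit_int_def j_def ..
  ultimately show ?thesis
    using gn2_hit_recurrence[OF j(2,3)] by simp
qed

end

locale GN2_half = GN2 +
  fixes s :: int
  assumes half: "(2 * s) mod int N = 1"
begin

abbreviation "p \<equiv> gn2_potential N s"

lemma N_dvd_2s_minus_1: "int N dvd 2 * s - 1"
  using half N_ge_5 int_mod_eq_iff_dvd[of 1 "int N" "2 * s"] by simp

lemma N_dvd_half_mult_iff: "int N dvd s * k \<longleftrightarrow> int N dvd k"
proof
  assume "int N dvd s * k"
  then have "int N dvd 2 * (s * k) - (2 * s - 1) * k"
    using N_dvd_2s_minus_1 by (intro dvd_diff) auto
  then show "int N dvd k" by (simp add: algebra_simps)
qed simp

text \<open>Multiplication by \<open>s = 2\<^sup>-\<^sup>1\<close> turns the steps \<open>\<plusminus>2\<close> of the complement cycle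
  into \<open>\<plusminus>1\<close>.\<close>

lemma gn2_potential_step:
  assumes "int N dvd int y - int x - 2 * d"
  shows "p w y = gn2_hit_int N (s * (int x - int w) + d)"
proof -
  have "s * (int y - int w) - (s * (int x - int w) + d) = s * (int y - int x - 2 * d) + (2 * s - 1) * d"
    by (simp add: algebra_simps)
  then have "int N dvd s * (int y - int w) - (s * (int x - int w) + d)"
    using assms N_dvd_2s_minus_1 by simp
  then have "(s * (int y - int w)) mod int N = (s * (int x - int w) + d) mod int N"
    by (simp add: mod_eq_dvd_iff)
  then show ?thesis
    unfolding gn2_potential_def gn2_hit_int_def by simp
qed

lemma gn2_potential_neighbours:
  assumes "x < N"
  shows "p w ((x + 2) mod N) = gn2_hit_int N (s * (int x - int w) + 1)"
    and "p w ((x + N - 2) mod N) = gn2_hit_int N (s * (int x - int w) - 1)"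
proof -
  have "int N dvd int ((x + 2) mod N) - int (x + 2)"
    using eq_mod_iff_dvd[of "(x + 2) mod N" N "x + 2"] N_ge_5 by simp
  then show "p w ((x + 2) mod N) = gn2_hit_int N (s * (int x - int w) + 1)"
    by (intro gn2_potential_step) (simp add: algebra_simps)
  have "int N dvd int ((x + N - 2) mod N) - int (x + N - 2)"
    using eq_mod_iff_dvd[of "(x + N - 2) mod N" N "x + N - 2"] N_ge_5 by simp
  moreover have "int ((x + N - 2) mod N) - int x - 2 * (- 1)
      = (int ((x + N - 2) mod N) - int (x + N - 2)) + int N"
    using N_ge_5 by (simp add: of_nat_diff)
  ultimately have "int N dvd int ((x + N - 2) mod N) - int x - 2 * (- 1)"
    by (metis dvd_add dvd_refl)
  then show "p w ((x + N - 2) mod N) = gn2_hit_int N (s * (int x - int w) - 1)"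
    using gn2_potential_step by fastforce
qed

lemma sum_gn2_potential:
  assumes "w < N"
  shows "(\<Sum>x\<in>V. p w x) = (\<Sum>j<N. g j)"
proof -
  define \<sigma> where "\<sigma> x = nat ((s * (int x - int w)) mod int N)" for x
  have "inj_on \<sigma> V"
  proof (rule inj_onI)
    fix x y assume "x \<in> V" "y \<in> V" "\<sigma> x = \<sigma> y"
    then have "(s * (int x - int w)) mod int N = (s * (int y - int w)) mod int N"
      unfolding \<sigma>_def using mod_N_bounds by (metis nat_eq_iff2)
    then have "int N dvd s * (int x - int y)"
      by (simp add: mod_eq_dvd_iff algebra_simps)
    then show "x = y"
      using \<open>x \<in> V\<close> \<open>y \<in> V\<close> eq_mod_iff_dvd[of x N y] by (simp add: N_dvd_half_mult_iff)
  qed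
  moreover have "\<sigma> ` V = {..<N}"
  proof (rule card_subset_eq)
    show "\<sigma> ` V \<subseteq> {..<N}" using nat_mod_less by (auto simp: \<sigma>_def)
    show "card (\<sigma> ` V) = card {..<N}" using card_image[OF \<open>inj_on \<sigma> V\<close>] by simp
  qed simp
  ultimately show ?thesis
    unfolding gn2_potential_def gn2_hit_int_def \<sigma>_def[symmetric]
    using sum.reindex[of \<sigma> V g] by simp
qed

lemma hitting_potential_GN2:
  assumes "w < N"
  shows "hitting_potential V adj w (p w)"
  unfolding hitting_potential_def
proof (intro conjI ballI)
  show "p w w = 0"
    unfolding gn2_potential_def gn2_hit_int_def using gn2_hit_0 by simp
  fix x assume "x \<in> V - {w}"
  then have "x < N" "x \<noteq> w" by auto
  define k where "k = s * (int x - int w)"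
  have "k mod int N \<noteq> 0"
    using \<open>x < N\<close> \<open>x \<noteq> w\<close> assms eq_mod_iff_dvd[of x N w] unfolding k_def
    by (auto simp: N_dvd_half_mult_iff)
  have "laplacian V adj (p w) x
      = (real N - 2) * gn2_hit_int N k + gn2_hit_int N (k + 1) + gn2_hit_int N (k - 1)
        - (\<Sum>j<N. g j)"
    unfolding laplacian_GN2[OF \<open>x < N\<close>] gn2_potential_neighbours[OF \<open>x < N\<close>]
      sum_gn2_potential[OF assms]
    by (simp add: k_def gn2_potential_def)
  also have "\<dots> = real N - 3"
    using gn2_hit_int_recurrence[OF \<open>k mod int N \<noteq> 0\<close>] by simp
  finally show "laplacian V adj (p w) x = real (deg V adj x)"
    using deg_GN2[OF \<open>x < N\<close>] N_ge_5 by (simp add: of_nat_diff)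
qed

lemma gn2_potential_swap: "p u v = p v u"
  unfolding gn2_potential_def using gn2_hit_int_uminus[of "s * (int v - int u)"]
  by (simp add: algebra_simps)

lemma gn2_potential_pos: "u < N \<Longrightarrow> v < N \<Longrightarrow> u \<noteq> v \<Longrightarrow> 0 < p v u"
  unfolding gn2_potential_def using eq_mod_iff_dvd[of u N v]
  by (intro gn2_hit_int_pos) (auto simp: mod_eq_0_iff_dvd N_dvd_half_mult_iff)

lemma tail_prob_GN2_sums:
  assumes "u < N" and "v < N"
  shows "tail_prob V adj u v sums p v u"
  using assms N_ge_5 deg_GN2 gn2_hit_int_nonneg
  by (intro tail_prob_sums_hitting_potential hitting_potential_GN2) (auto simp: gn2_potential_def)

lemma hitting_time_GN2:
  "u < N \<Longrightarrow> v < N \<Longrightarrow> hitting_time V adj u v = p v u"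
  unfolding hitting_time_def using tail_prob_GN2_sums by (simp add: sums_iff)

lemma eff_res_GN2:
  assumes "u < N" and "v < N" and "u \<noteq> v"
  shows "eff_res V adj u v = 2 * p v u / (real N * (real N - 3))"
proof -
  have "(\<Sum>x\<in>V. real (deg V adj x)) = real N * (real N - 3)"
    using deg_GN2 N_ge_5 by (simp add: of_nat_diff)
  moreover have "eff_res V adj u v = (p v u + p u v) / (\<Sum>x\<in>V. real (deg V adj x))"
    using assms gn2_potential_pos[OF assms] gn2_potential_swap[of u v]
    by (intro eff_res_hitting_potentials hitting_potential_GN2) (auto simp: GN2_adj_sym)
  ultimately show ?thesis using gn2_potential_swap[of u v] by simp
qed

lemma hitting_time_GN2_eq_eff_res:
  assumes "u < N" and "v < N"
  shows "hitting_time V adj u v = real N * (real N - 3) / 2 * eff_res V adj u v"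
proof (cases "u = v")
  case True
  then show ?thesis
    using hitting_time_GN2[OF assms] hitting_potential_GN2[OF assms(2)]
    by (simp add: eff_res_def hitting_potential_def)
next
  case False
  then show ?thesis
    using hitting_time_GN2[OF assms] eff_res_GN2[OF assms] N_ge_5 by simp
qed

lemma gn2_potential_closed_form:
  assumes "u < N" and "v < N"
  defines "q \<equiv> (int v - int u) mod int N"
  defines "d \<equiv> min ((s * q) mod int N) (int N - (s * q) mod int N)"
  shows "p v u = g (nat d)"
proof -
  define r where "r = (s * q) mod int N"
  have "p v u = p u v"
    by (rule gn2_potential_swap)
  also have "\<dots> = gn2_hit_int N (s * q)"
    unfolding gn2_potential_def gn2_hit_int_def q_def by (simp add: mod_mult_right_eq)
  also have "\<dots> = g (nat r)"
    unfolding gn2_hit_int_def r_def ..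
  also have "\<dots> = g (nat d)"
    using mod_N_bounds[of "s * q"] gn2_hit_reflect[of "nat r"]
    unfolding d_def r_def[symmetric] by (auto simp: min_def nat_diff_distrib)
  finally show ?thesis .
qed

end

theorem corollary4p4:
  fixes N u v :: nat and s :: int
  assumes "odd N" and "N \<ge> 5" and "u < N" and "v < N"
    and "(2 * s) mod int N = 1"
  shows "(\<forall>x<N. deg {0..<N} (GN2_adj N) x = N - 3)
    \<and> card (edges {0..<N} (GN2_adj N)) = N * (N - 3) div 2
    \<and> hitting_time {0..<N} (GN2_adj N) u v
        = real N * (real N - 3) / 2 * eff_res {0..<N} (GN2_adj N) u v
    \<and> (let \<Delta> = sqrt (real N * (real N - 4));
           \<rho> = (real N - 2 + \<Delta>) / 2;
           q = (int v - int u) mod int N;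
           d = min ((s * q) mod int N) (int N - (s * q) mod int N)
       in tail_prob {0..<N} (GN2_adj N) u v sums
            (real N * (real N - 3) / (\<Delta> * (\<rho> ^ N + 1)) *
             (\<rho> ^ N - 1 + (-1) ^ nat d * (\<rho> ^ nat d - \<rho> ^ (N - nat d)))))"
proof -
  interpret GN2_half N s
    using assms by unfold_locales auto
  have "tail_prob {0..<N} (GN2_adj N) u v sums
      gn2_hit N (nat (min ((s * ((int v - int u) mod int N)) mod int N)
                          (int N - (s * ((int v - int u) mod int N)) mod int N)))"
    using tail_prob_GN2_sums[OF assms(3,4)] gn2_potential_closed_form[OF assms(3,4)] by simp
  then show ?thesis
    using deg_GN2 card_edges_GN2 hitting_time_GN2_eq_eff_res[OF assms(3,4)]
    unfolding Let_def gn2_hit_def gn2_scale_def gn2_rho_def gn2_Delta_def by auto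
qed

end
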